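(* Let $n\ge 1$ be an integer. The game value of \textsc{Snort} played on the star $K_{1,n}$ whose centre is tinted blue (and whose leaves are untinted) is $\{\, n \mid * \,\}$ if $n$ is even, and $\{\, n \mid 0 \,\}$ if $n$ is odd.
   Context: \textsc{Snort} is a two-player normal-play combinatorial game (the player unable to move loses) between Left (blue) and Right (red), played on a finite simple graph in which each vertex may be tinted blue, tinted red, or untinted. Left may move on any vertex not tinted red; Right may move on any vertex not tinted blue. A move on vertex $v$ deletes $v$ and tints all neighbours of $v$ in the mover's colour; any vertex that thereby becomes tinted in both colours is deleted. (This is equivalent to the original game in which players alternately colour vertices and may not colour a vertex adjacent to an opponent-coloured vertex.) Game values are in the standard sense of combinatorial game theory: $\{A \mid B\}$ denotes the game with Left options $A$ and Right options $B$, $0=\{\,\mid\,\}$, $*=\{0\mid 0\}$, and equality is the usual equality of games. $K_{1,n}$ is the star with one centre vertex adjacent to $n$ leaves. *)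

theory Defs
  imports Main
begin

datatype game = Game (left_opts: "game list") (right_opts: "game list")

function game_le :: "game \<Rightarrow> game \<Rightarrow> bool" where
  "game_le (Game GL GR) (Game HL HR) \<longleftrightarrow>
     (\<forall>gl \<in> set GL. \<not> game_le (Game HL HR) gl) \<and>
     (\<forall>hr \<in> set HR. \<not> game_le hr (Game GL GR))"
  by pat_completeness auto
termination
  by (relation "measure (\<lambda>(G, H). size G + size H)")
     (auto dest!: size_list_estimation' [where f = size and y = "size _", OF _ order_refl]
           simp: size_list_estimation')

definition game_eq :: "game \<Rightarrow> game \<Rightarrow> bool" where
  "game_eq G H \<longleftrightarrow> game_le G H \<and> game_le H G"

definition zero_game :: game where "zero_game = Game [] []"
definition star_game :: game where "star_game = Game [zero_game] [zero_game]"

primrec nat_game :: "nat \<Rightarrow> game" where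
  "nat_game 0 = zero_game"
| "nat_game (Suc k) = Game [nat_game k] []"

datatype tint = Untinted | Blue | Red

datatype player = LeftP | RightP

definition colour :: "player \<Rightarrow> tint" where
  "colour p = (case p of LeftP \<Rightarrow> Blue | RightP \<Rightarrow> Red)"

definition opp_colour :: "player \<Rightarrow> tint" where
  "opp_colour p = (case p of LeftP \<Rightarrow> Red | RightP \<Rightarrow> Blue)"

text \<open>A position: a fixed symmetric irreflexive edge relation E (on the
  ambient vertex type), the finite set V of remaining vertices, and a tint
  function.\<close>
definition legal :: "player \<Rightarrow> 'a set \<Rightarrow> ('a \<Rightarrow> tint) \<Rightarrow> 'a \<Rightarrow> bool" where
  "legal p V t v \<longleftrightarrow> v \<in> V \<and> t v \<noteq> opp_colour p"

text \<open>Moving on v deletes v, tints the neighbours of v in the mover's colour,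
  and deletes neighbours that thereby become tinted in both colours (i.e.
  those that were tinted in the opponent's colour).\<close>
definition move_V :: "('a \<Rightarrow> 'a \<Rightarrow> bool) \<Rightarrow> player \<Rightarrow> 'a set \<Rightarrow> ('a \<Rightarrow> tint) \<Rightarrow> 'a \<Rightarrow> 'a set" where
  "move_V E p V t v = {u \<in> V. u \<noteq> v \<and> \<not> (E v u \<and> t u = opp_colour p)}"

definition move_t :: "('a \<Rightarrow> 'a \<Rightarrow> bool) \<Rightarrow> player \<Rightarrow> ('a \<Rightarrow> tint) \<Rightarrow> 'a \<Rightarrow> ('a \<Rightarrow> tint)" where
  "move_t E p t v = (\<lambda>u. if E v u then colour p else t u)"

text \<open>Game value computed with a fuel parameter (number of vertices);
  each move removes at least one vertex, so fuel = card V suffices.\<close>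
primrec snort_aux :: "('a::linorder \<Rightarrow> 'a \<Rightarrow> bool) \<Rightarrow> nat \<Rightarrow> 'a set \<Rightarrow> ('a \<Rightarrow> tint) \<Rightarrow> game" where
  "snort_aux E 0 V t = Game [] []"
| "snort_aux E (Suc k) V t =
     Game (map (\<lambda>v. snort_aux E k (move_V E LeftP V t v) (move_t E LeftP t v))
               (filter (legal LeftP V t) (sorted_list_of_set V)))
          (map (\<lambda>v. snort_aux E k (move_V E RightP V t v) (move_t E RightP t v))
               (filter (legal RightP V t) (sorted_list_of_set V)))"

definition snort_value :: "('a::linorder \<Rightarrow> 'a \<Rightarrow> bool) \<Rightarrow> 'a set \<Rightarrow> ('a \<Rightarrow> tint) \<Rightarrow> game" where
  "snort_value E V t = snort_aux E (card V) V t"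

text \<open>The star K_{1,n}: centre 0, leaves 1..n.\<close>
definition star_edges :: "nat \<Rightarrow> nat \<Rightarrow> bool" where
  "star_edges u v \<longleftrightarrow> (u = 0 \<and> v \<noteq> 0) \<or> (v = 0 \<and> u \<noteq> 0)"

definition star_centre_blue :: "nat \<Rightarrow> tint" where
  "star_centre_blue u = (if u = 0 then Blue else Untinted)"

end

theory Submission
  imports Defs
begin

(* Write S_n for the star with blue centre and n untinted leaves.  Left's move on the centre
   tints every leaf blue, leaving n isolated blue vertices, worth the integer n.  Left's move on a
   leaf leaves S_(n-1), while Right's move on a leaf also deletes the (now doubly tinted) centre,
   leaving n - 1 isolated untinted vertices: a sum of n - 1 copies of *, which is 0 or * by
   parity.  So S_n = {n, S_(n-1) | (n-1).*}, and since S_(n-1) <= n by induction, the option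
   S_(n-1) is dominated: S_n = {n | (n-1).*}. *)

primrec isolated_untinted_game :: "nat \<Rightarrow> game" where
  "isolated_untinted_game 0 = zero_game"
| "isolated_untinted_game (Suc k) =
     Game (replicate (Suc k) (isolated_untinted_game k))
          (replicate (Suc k) (isolated_untinted_game k))"

primrec isolated_blue_game :: "nat \<Rightarrow> game" where
  "isolated_blue_game 0 = zero_game"
| "isolated_blue_game (Suc k) = Game (replicate (Suc k) (isolated_blue_game k)) []"

primrec blue_centred_star_game :: "nat \<Rightarrow> game" where
  "blue_centred_star_game 0 = Game [isolated_blue_game 0] []"
| "blue_centred_star_game (Suc k) =
     Game (isolated_blue_game (Suc k) # replicate (Suc k) (blue_centred_star_game k))
          (replicate (Suc k) (isolated_untinted_game k))"

lemma game_le_left_optD: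
  "game_le G H \<Longrightarrow> gl \<in> set (left_opts G) \<Longrightarrow> \<not> game_le H gl"
  by (cases G; cases H) auto

lemma game_le_right_optD:
  "game_le G H \<Longrightarrow> hr \<in> set (right_opts H) \<Longrightarrow> \<not> game_le hr G"
  by (cases G; cases H) auto

lemma game_leI:
  "(\<And>gl. gl \<in> set (left_opts G) \<Longrightarrow> \<not> game_le H gl) \<Longrightarrow>
   (\<And>hr. hr \<in> set (right_opts H) \<Longrightarrow> \<not> game_le hr G) \<Longrightarrow> game_le G H"
  by (cases G; cases H) auto

lemma isolated_blue_game_eq_nat_game: "game_eq (isolated_blue_game k) (nat_game k)"
  unfolding game_eq_def
  by (induction k) (auto simp: zero_game_def dest: game_le_left_optD game_le_right_optD)

lemma not_nat_game_Suc_le_isolated_blue_game: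
  "\<not> game_le (nat_game (Suc k)) (isolated_blue_game k)"
  using isolated_blue_game_eq_nat_game[of k] by (auto simp: game_eq_def dest: game_le_left_optD)

lemma blue_centred_star_game_le_nat_game_Suc:
  "game_le (blue_centred_star_game k) (nat_game (Suc k))"
proof (induction k)
  case 0
  then show ?case by (simp add: zero_game_def)
next
  case (Suc k)
  then have "\<not> game_le (nat_game (Suc (Suc k))) (blue_centred_star_game k)"
    by (auto dest: game_le_left_optD)
  then show ?case
    using not_nat_game_Suc_le_isolated_blue_game[of "Suc k"] by simp
qed

(* The two incomparabilities are carried along because transitivity of game_le is not available:
   they are exactly what the next induction step needs. *)
lemma isolated_untinted_game_parity:
  "game_eq (isolated_untinted_game k) (if even k then zero_game else star_game) \<and>
   \<not> game_le (isolated_untinted_game k) (if even k then star_game else zero_game) \<and>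
   \<not> game_le (if even k then star_game else zero_game) (isolated_untinted_game k)"
  unfolding game_eq_def
  by (induction k)
    (auto simp: zero_game_def star_game_def dest: game_le_left_optD game_le_right_optD)

lemma map_sorted_list_of_set_const:
  "finite A \<Longrightarrow> (\<And>x. x \<in> A \<Longrightarrow> f x = c) \<Longrightarrow>
   map f (sorted_list_of_set A) = replicate (card A) c"
  by (rule replicate_eqI) auto

lemma move_V_eq_Diff:
  "(\<And>u. u \<in> V \<Longrightarrow> E v u \<Longrightarrow> t u \<noteq> opp_colour p) \<Longrightarrow>
   move_V E p V t v = V - {v}"
  by (auto simp: move_V_def)

lemma snort_aux_isolated_untinted:
  fixes E :: "'a::linorder \<Rightarrow> 'a \<Rightarrow> bool"
  assumes "finite L" "\<forall>u\<in>L. \<forall>v\<in>L. \<not> E u v"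
    and "\<forall>u\<in>L. t u = Untinted" "card L \<le> f"
  shows "snort_aux E f L t = isolated_untinted_game (card L)"
  using assms
proof (induction f arbitrary: L t)
  case 0
  then show ?case by (simp add: zero_game_def)
next
  case (Suc f)
  have legal: "filter (legal p L t) (sorted_list_of_set L) = sorted_list_of_set L" for p
    using Suc.prems by (auto simp: filter_id_conv legal_def opp_colour_def split: player.splits)
  have "snort_aux E f (move_V E p L t v) (move_t E p t v) =
      isolated_untinted_game (card L - 1)"
    if "v \<in> L" for p v
  proof -
    have "move_V E p L t v = L - {v}"
      using Suc.prems that by (intro move_V_eq_Diff) auto
    then show ?thesis
      using Suc.prems that by (simp add: Suc.IH move_t_def)
  qed
  then show ?case
    using Suc.prems(1)
    by (cases "card L") (simp_all add: legal map_sorted_list_of_set_const zero_game_def)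
qed

lemma snort_aux_isolated_blue:
  fixes E :: "'a::linorder \<Rightarrow> 'a \<Rightarrow> bool"
  assumes "finite L" "\<forall>u\<in>L. \<forall>v\<in>L. \<not> E u v"
    and "\<forall>u\<in>L. t u = Blue" "card L \<le> f"
  shows "snort_aux E f L t = isolated_blue_game (card L)"
  using assms
proof (induction f arbitrary: L t)
  case 0
  then show ?case by (simp add: zero_game_def)
next
  case (Suc f)
  have legal_left: "filter (legal LeftP L t) (sorted_list_of_set L) = sorted_list_of_set L"
    and legal_right: "filter (legal RightP L t) (sorted_list_of_set L) = []"
    using Suc.prems by (auto simp: filter_id_conv filter_empty_conv legal_def opp_colour_def)
  have "snort_aux E f (move_V E LeftP L t v) (move_t E LeftP t v) =
      isolated_blue_game (card L - 1)"
    if "v \<in> L" for v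
  proof -
    have "move_V E LeftP L t v = L - {v}"
      using Suc.prems that by (intro move_V_eq_Diff) auto
    then show ?thesis
      using Suc.prems that by (simp add: Suc.IH move_t_def)
  qed
  then show ?case
    using Suc.prems(1)
    by (cases "card L")
      (simp_all add: legal_left legal_right map_sorted_list_of_set_const zero_game_def)
qed

lemma sorted_list_of_set_insert_least:
  fixes A :: "'a::linorder set"
  assumes "finite A" "\<forall>x\<in>A. c < x"
  shows "sorted_list_of_set (insert c A) = c # sorted_list_of_set A"
proof -
  have "c \<notin> A"
    using assms(2) by blast
  then show ?thesis
    using assms by (simp add: insort_is_Cons less_imp_le)
qed

(* The hypothesis c < u only puts the centre's option first in Left's option list. *)
lemma snort_aux_blue_centred_star:
  fixes E :: "'a::linorder \<Rightarrow> 'a \<Rightarrow> bool"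
  assumes "finite L" "\<forall>u\<in>L. c < u"
    and "\<forall>u\<in>L. E c u \<and> E u c" "\<forall>u\<in>L. \<forall>v\<in>L. \<not> E u v"
    and "t c = Blue" "\<forall>u\<in>L. t u = Untinted" "Suc (card L) \<le> f"
  shows "snort_aux E f (insert c L) t = blue_centred_star_game (card L)"
  using assms
proof (induction f arbitrary: L t)
  case 0
  then show ?case by simp
next
  case (Suc f)
  have "c \<notin> L"
    using Suc.prems(2) by blast
  have order: "sorted_list_of_set (insert c L) = c # sorted_list_of_set L"
    using Suc.prems(1,2) by (rule sorted_list_of_set_insert_least)
  have legal_left: "filter (legal LeftP (insert c L) t) (c # sorted_list_of_set L) =
      c # sorted_list_of_set L"
    and legal_right: "filter (legal RightP (insert c L) t) (c # sorted_list_of_set L) =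
      sorted_list_of_set L"
    using Suc.prems by (auto simp: filter_id_conv legal_def opp_colour_def)
  have centre: "snort_aux E f (move_V E LeftP (insert c L) t c) (move_t E LeftP t c) =
      isolated_blue_game (card L)"
  proof -
    have "move_V E LeftP (insert c L) t c = L"
      using Suc.prems \<open>c \<notin> L\<close> by (subst move_V_eq_Diff) (auto simp: opp_colour_def)
    then show ?thesis
      using Suc.prems by (simp add: snort_aux_isolated_blue move_t_def colour_def)
  qed
  have leaf_left: "snort_aux E f (move_V E LeftP (insert c L) t v) (move_t E LeftP t v) =
      blue_centred_star_game (card L - 1)" if "v \<in> L" for v
  proof -
    have "move_V E LeftP (insert c L) t v = insert c (L - {v})"
      using Suc.prems that \<open>c \<notin> L\<close> by (subst move_V_eq_Diff) (auto simp: opp_colour_def)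
    moreover have "Suc (card (L - {v})) \<le> f"
      using Suc.prems(1,7) that card_gt_0_iff[of L] by auto
    ultimately show ?thesis
      using Suc.prems that by (simp add: Suc.IH move_t_def colour_def)
  qed
  have leaf_right: "snort_aux E f (move_V E RightP (insert c L) t v) (move_t E RightP t v) =
      isolated_untinted_game (card L - 1)" if "v \<in> L" for v
  proof -
    have "move_V E RightP (insert c L) t v = L - {v}"
      using Suc.prems that \<open>c \<notin> L\<close> by (auto simp: move_V_def opp_colour_def)
    then show ?thesis
      using Suc.prems that by (simp add: snort_aux_isolated_untinted move_t_def)
  qed
  show ?case
    unfolding snort_aux.simps order legal_left legal_right
    using Suc.prems(1) centre leaf_left leaf_right
    by (cases "card L") (simp_all add: map_sorted_list_of_set_const)
qed

lemma snort_value_star_centre_blue: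
  "snort_value star_edges {0..n} star_centre_blue = blue_centred_star_game n"
proof -
  have "snort_aux star_edges (Suc n) (insert 0 {1..n}) star_centre_blue =
      blue_centred_star_game (card {1..n})"
    by (rule snort_aux_blue_centred_star) (auto simp: star_edges_def star_centre_blue_def)
  moreover have "insert 0 {1..n} = {0..n}"
    by auto
  ultimately show ?thesis
    by (simp add: snort_value_def del: snort_aux.simps)
qed

lemma blue_centred_star_game_eq:
  assumes "game_eq (isolated_untinted_game k) R"
  shows "game_eq (blue_centred_star_game (Suc k)) (Game [nat_game (Suc k)] [R])"
proof -
  have "game_le (blue_centred_star_game (Suc k)) (Game [nat_game (Suc k)] [R])"
  proof (rule game_leI)
    fix gl
    assume "gl \<in> set (left_opts (blue_centred_star_game (Suc k)))"
    then have "gl = isolated_blue_game (Suc k) \<or> gl = blue_centred_star_game k"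
      by auto
    then show "\<not> game_le (Game [nat_game (Suc k)] [R]) gl"
      using isolated_blue_game_eq_nat_game[of "Suc k"]
        blue_centred_star_game_le_nat_game_Suc[of k]
      by (auto simp: game_eq_def dest: game_le_left_optD)
  next
    show "\<not> game_le hr (blue_centred_star_game (Suc k))"
      if "hr \<in> set (right_opts (Game [nat_game (Suc k)] [R]))" for hr
      using that assms by (auto simp: game_eq_def dest: game_le_right_optD)
  qed
  moreover have "game_le (Game [nat_game (Suc k)] [R]) (blue_centred_star_game (Suc k))"
    using assms isolated_blue_game_eq_nat_game[of "Suc k"]
    by (intro game_leI) (auto simp: game_eq_def dest: game_le_left_optD game_le_right_optD)
  ultimately show ?thesis
    by (simp add: game_eq_def)
qed

theorem lemma2:
  fixes n :: nat
  assumes "n \<ge> 1"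
  shows "game_eq (snort_value star_edges {0..n} star_centre_blue)
           (if even n then Game [nat_game n] [star_game] else Game [nat_game n] [zero_game])"
proof -
  obtain k where n: "n = Suc k"
    using assms by (cases n) auto
  have "game_eq (isolated_untinted_game k) (if even n then star_game else zero_game)"
    using isolated_untinted_game_parity[of k] n by auto
  then have "game_eq (blue_centred_star_game n)
      (Game [nat_game n] [if even n then star_game else zero_game])"
    unfolding n by (rule blue_centred_star_game_eq)
  then show ?thesis
    by (cases "even n") (simp_all add: snort_value_star_centre_blue)
qed

end
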